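(* For Lebesgue-almost every $x\in(0,3)$, $k_x(\varepsilon)\sim\log_{2/3}|\varepsilon|$ as $\varepsilon\to0$, i.e. $k_x(\varepsilon)/\log_{2/3}|\varepsilon|\to1$.
   Context: Let $T=T_{2/3}:[0,3]\to[0,3]$ be given by $T(x)=\frac32(x+1)$ for $0\le x<1$ and $T(x)=\frac32(x-1)$ for $1\le x\le3$ (so $T(1)=0$). For $x\in[0,3]$ and $n\ge0$ let $\delta_n(x)=\mathbb 1\{T^n(x)<1\}$. For $x\in[0,3]$ and real $\varepsilon\ne0$ with $x+\varepsilon\in[0,3]$, let $k_x(\varepsilon)=\min\{n\ge0:\delta_n(x)\neq\delta_n(x+\varepsilon)\}$. *)

theory Defs
  imports "HOL-Analysis.Analysis"
begin

text \<open>The map T_{2/3} on [0,3]: T(x) = 3/2 (x+1) for 0 <= x < 1, T(x) = 3/2 (x-1) for 1 <= x <= 3.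
  Values outside [0,3] are irrelevant (orbits of points of [0,3] stay in [0,3]).\<close>
definition T :: "real \<Rightarrow> real" where
  "T x = (if x < 1 then 3/2 * (x + 1) else 3/2 * (x - 1))"

definition delta :: "nat \<Rightarrow> real \<Rightarrow> bool" where
  "delta n x = ((T ^^ n) x < 1)"

definition kx :: "real \<Rightarrow> real \<Rightarrow> nat" where
  "kx x \<epsilon> = (LEAST n. delta n x \<noteq> delta n (x + \<epsilon>))"

end

theory Submission
  imports Defs "HOL-Real_Asymp.Real_Asymp"
begin

(* While x and y have the same first n symbols, T^n acts on both by one affine map of slope 3/2,
   so T^n y - T^n x = (3/2)^n (y - x).  For k = k_x(eps) this gives (3/2)^k |eps| <= 3, that is
   k <= log_{2/3} |eps| + O(1), and |T^k x - 1| <= (3/2)^k |eps|.  Lebesgue measure on [0,3] is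
   dominated by the T-subinvariant Parry measure, whose density is at most 3, so the event
   |T^n x - 1| <= q^n has measure at most 6 q^n.  By Borel-Cantelli, for a.e. x and every theta > 0,
   |T^n x - 1| >= c (2/3)^(theta n) for some c > 0, which turns the second estimate into
   log_{2/3} |eps| <= (1 + theta) k + O(1). *)

lemma tendsto_quotient_1_sandwich:
  fixes k L :: "'a \<Rightarrow> real"
  assumes L: "filterlim L at_top F"
    and upper: "eventually (\<lambda>y. k y \<le> L y + C) F"
    and lower: "\<And>\<theta>. \<theta> > 0 \<Longrightarrow> \<exists>C'. eventually (\<lambda>y. L y \<le> (1 + \<theta>) * k y + C') F"
  shows "((\<lambda>y. k y / L y) \<longlongrightarrow> 1) F"
proof (rule tendstoI)
  fix e :: real assume e: "e > 0"
  obtain C' where C': "eventually (\<lambda>y. L y \<le> (1 + e) * k y + C') F"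
    using lower e by blast
  have "eventually (\<lambda>y. max 1 (max (C / e) (C' / e\<^sup>2)) < L y) F"
    using L unfolding filterlim_at_top_dense by blast
  with upper C' show "eventually (\<lambda>y. dist (k y / L y) 1 < e) F"
  proof eventually_elim
    case (elim y)
    then have L0: "L y > 0" and "C < e * L y" and "C' < e\<^sup>2 * L y"
      using e by (auto simp: field_simps)
    with elim e have "k y < (1 + e) * L y" and "(1 + e) * ((1 - e) * L y) < (1 + e) * k y"
      by (auto simp: algebra_simps power2_eq_square)
    moreover from this(2) have "(1 - e) * L y < k y"
      by (rule mult_left_less_imp_less) (use e in simp)
    ultimately have "\<bar>k y - L y\<bar> < e * L y"
      unfolding abs_less_iff by (simp add: algebra_simps)
    moreover have "k y / L y - 1 = (k y - L y) / L y"
      using L0 by (simp add: field_simps)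
    ultimately show ?case
      using L0 by (simp add: dist_real_def pos_divide_less_eq)
  qed
qed

lemma uniform_scaled_lower_bound:
  fixes f g :: "nat \<Rightarrow> real"
  assumes f: "\<And>n. 0 < f n" and g: "\<And>n. 0 < g n"
    and ev: "eventually (\<lambda>n. g n < f n) sequentially"
  shows "\<exists>c>0. \<forall>n. c * g n \<le> f n"
proof -
  obtain N where N: "\<And>n. n \<ge> N \<Longrightarrow> g n < f n"
    using ev by (auto simp: eventually_sequentially)
  define c where "c = Min (insert 1 ((\<lambda>n. f n / g n) ` {..<N}))"
  have c_pos: "c > 0"
    unfolding c_def using f g by (subst Min_gr_iff) auto
  moreover have "c * g n \<le> f n" for n
  proof (cases "n < N")
    case True
    then have "c \<le> f n / g n"
      unfolding c_def by (intro Min_le) auto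
    then show ?thesis
      using g[of n] by (simp add: pos_le_divide_eq)
  next
    case False
    have "c \<le> 1"
      unfolding c_def by (intro Min_le) auto
    then have "c * g n \<le> g n"
      using c_pos g[of n] by (intro mult_left_le_one_le) auto
    then show ?thesis
      using N[of n] False by simp
  qed
  ultimately show ?thesis by blast
qed

lemma ennreal_suminf_split_head: "(\<Sum>n. f n :: ennreal) = f 0 + (\<Sum>n. f (Suc n))"
  using sums_unique[OF sums_Suc[OF summable_sums[OF summableI[of "\<lambda>n. f (Suc n)"]]]]
  by (simp add: add.commute)

lemma affine_vimage_in_borel [measurable]:
  assumes "B \<in> sets borel"
  shows "(\<lambda>x::real. t + c * x) -` B \<in> sets borel"
proof -
  have "(\<lambda>x::real. t + c * x) \<in> borel_measurable borel"
    by measurable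
  from measurable_sets[OF this assms] show ?thesis
    by simp
qed

lemma emeasure_lborel_affine_vimage:
  assumes c: "c > 0" and [measurable]: "B \<in> sets borel"
  shows "emeasure lborel ((\<lambda>x. t + c * x) -` B) = ennreal (1/c) * emeasure lborel B"
proof -
  have "emeasure lborel B = ennreal c * emeasure lborel ((\<lambda>x. t + c * x) -` B)"
    using c by (subst lborel_real_affine[of c t])
      (auto simp: emeasure_density emeasure_distr nn_integral_cmult_indicator)
  then show ?thesis
    using c by (simp add: ennreal_mult[symmetric] mult.assoc[symmetric])
qed

lemma log_two_thirds: "log (2/3) y = - log (3/2) y"
proof -
  have "ln (2/3::real) = - ln (3/2)"
    by (simp add: ln_div)
  then show ?thesis
    by (simp add: log_def)
qed

lemma filterlim_log_two_thirds_abs_at_0: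
  "filterlim (\<lambda>\<epsilon>. log (2/3) \<bar>\<epsilon>\<bar>) at_top (at (0::real))"
  by (rule filterlim_split_at) real_asymp+

lemma T_less_1: "x < 1 \<Longrightarrow> T x = 3/2 + 3/2 * x"
  unfolding T_def by simp

lemma T_ge_1: "\<not> x < 1 \<Longrightarrow> T x = -3/2 + 3/2 * x"
  unfolding T_def by simp

lemma funpow_T_in_range: "x \<in> {0..3} \<Longrightarrow> (T ^^ n) x \<in> {0..3}"
  by (induction n) (auto simp: T_def)

lemma measurable_T [measurable]: "T \<in> borel_measurable borel"
  unfolding T_def[abs_def] by measurable

lemma measurable_funpow_T [measurable]: "T ^^ n \<in> borel_measurable borel"
  by (induction n) auto

lemma sets_funpow_T_vimage [measurable]:
  assumes "A \<in> sets borel"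
  shows "{x\<in>{0..3}. (T ^^ n) x \<in> A} \<in> sets borel"
proof -
  have "{x\<in>{0..3}. (T ^^ n) x \<in> A} = (T ^^ n) -` A \<inter> {0..3}"
    by auto
  then show ?thesis
    using measurable_sets[OF measurable_funpow_T assms] by simp
qed

lemma sets_T_vimage [measurable]: "A \<in> sets borel \<Longrightarrow> {x\<in>{0..3}. T x \<in> A} \<in> sets borel"
  using sets_funpow_T_vimage[of A 1] by simp

section \<open>Expansion along common symbols\<close>

lemma funpow_T_diff_if_same_symbols:
  assumes "\<forall>i<n. delta i x = delta i y"
  shows "(T ^^ n) y - (T ^^ n) x = (3/2)^n * (y - x)"
  using assms
proof (induction n)
  case 0
  then show ?case by simp
next
  case (Suc n)
  then have IH: "(T ^^ n) y - (T ^^ n) x = (3/2)^n * (y - x)"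
    and same: "((T ^^ n) x < 1) = ((T ^^ n) y < 1)"
    by (auto simp: delta_def)
  show ?case
    using IH same by (cases "(T ^^ n) x < 1") (simp_all add: T_less_1 T_ge_1 algebra_simps)
qed

lemma same_symbols_expansion_le_3:
  assumes "x \<in> {0..3}" "y \<in> {0..3}" "\<forall>i<n. delta i x = delta i y"
  shows "(3/2)^n * \<bar>y - x\<bar> \<le> 3"
proof -
  have "\<bar>(T ^^ n) y - (T ^^ n) x\<bar> = (3/2)^n * \<bar>y - x\<bar>"
    using funpow_T_diff_if_same_symbols[OF assms(3)] by (simp add: abs_mult)
  moreover have "(T ^^ n) y \<in> {0..3}" "(T ^^ n) x \<in> {0..3}"
    using funpow_T_in_range assms(1,2) by auto
  ultimately show ?thesis
    by auto
qed

lemma kx_first_disagreement: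
  assumes "x \<in> {0..3}" "x + \<epsilon> \<in> {0..3}" "\<epsilon> \<noteq> 0"
  shows "delta (kx x \<epsilon>) x \<noteq> delta (kx x \<epsilon>) (x + \<epsilon>)"
    and "\<forall>i<kx x \<epsilon>. delta i x = delta i (x + \<epsilon>)"
proof -
  obtain n where n: "3 / \<bar>\<epsilon>\<bar> < (3/2::real)^n"
    using real_arch_pow[of "3/2" "3 / \<bar>\<epsilon>\<bar>"] by auto
  have "\<not> (3/2)^n * \<bar>\<epsilon>\<bar> \<le> 3"
    using n assms(3) by (simp add: divide_less_eq)
  then have "\<exists>n. delta n x \<noteq> delta n (x + \<epsilon>)"
    using same_symbols_expansion_le_3[OF assms(1,2), of n] by auto
  then show "delta (kx x \<epsilon>) x \<noteq> delta (kx x \<epsilon>) (x + \<epsilon>)"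
    unfolding kx_def by (rule LeastI_ex)
  show "\<forall>i<kx x \<epsilon>. delta i x = delta i (x + \<epsilon>)"
    unfolding kx_def using not_less_Least by blast
qed

lemma kx_separation:
  assumes "x \<in> {0..3}" "x + \<epsilon> \<in> {0..3}" "\<epsilon> \<noteq> 0"
  shows "(3/2)^kx x \<epsilon> * \<bar>\<epsilon>\<bar> \<le> 3"
    and "\<bar>(T ^^ kx x \<epsilon>) x - 1\<bar> \<le> (3/2)^kx x \<epsilon> * \<bar>\<epsilon>\<bar>"
proof -
  let ?k = "kx x \<epsilon>"
  show "(3/2)^?k * \<bar>\<epsilon>\<bar> \<le> 3"
    using same_symbols_expansion_le_3[OF assms(1,2) kx_first_disagreement(2)[OF assms]] by simp
  have diff: "\<bar>(T ^^ ?k) (x + \<epsilon>) - (T ^^ ?k) x\<bar> = (3/2)^?k * \<bar>\<epsilon>\<bar>"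
    using funpow_T_diff_if_same_symbols[OF kx_first_disagreement(2)[OF assms]]
    by (simp add: abs_mult)
  have "((T ^^ ?k) x < 1) \<noteq> ((T ^^ ?k) (x + \<epsilon>) < 1)"
    using kx_first_disagreement(1)[OF assms] unfolding delta_def .
  with diff show "\<bar>(T ^^ ?k) x - 1\<bar> \<le> (3/2)^?k * \<bar>\<epsilon>\<bar>"
    by arith
qed

lemma kx_le_log:
  assumes "x \<in> {0..3}" "x + \<epsilon> \<in> {0..3}" "\<epsilon> \<noteq> 0"
  shows "kx x \<epsilon> \<le> log (2/3) \<bar>\<epsilon>\<bar> + log (3/2) 3"
proof -
  have "log (3/2) ((3/2)^kx x \<epsilon> * \<bar>\<epsilon>\<bar>) \<le> log (3/2) 3"
    using kx_separation(1)[OF assms] assms(3) by (subst log_le_cancel_iff) auto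
  then show ?thesis
    using assms(3) by (simp add: log_mult log_nat_power log_two_thirds)
qed

lemma log_le_kx:
  fixes \<theta> :: real
  assumes "x \<in> {0..3}" "x + \<epsilon> \<in> {0..3}" "\<epsilon> \<noteq> 0"
    and "c > 0" and far: "\<And>n. c * (2/3) powr (\<theta> * real n) \<le> \<bar>(T ^^ n) x - 1\<bar>"
  shows "log (2/3) \<bar>\<epsilon>\<bar> \<le> (1 + \<theta>) * kx x \<epsilon> - log (3/2) c"
proof -
  let ?k = "kx x \<epsilon>"
  have "c * (2/3) powr (\<theta> * ?k) \<le> (3/2)^?k * \<bar>\<epsilon>\<bar>"
    using far[of ?k] kx_separation(2)[OF assms(1-3)] by linarith
  then have "log (3/2) (c * (2/3) powr (\<theta> * ?k)) \<le> log (3/2) ((3/2)^?k * \<bar>\<epsilon>\<bar>)"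
    using assms(3,4) by (subst log_le_cancel_iff) auto
  moreover have "log (3/2) ((2/3::real) powr (\<theta> * ?k)) = - \<theta> * ?k"
    using log_two_thirds[of "2/3"] by (simp add: log_powr)
  ultimately show ?thesis
    using assms(3,4) by (simp add: log_mult log_nat_power log_two_thirds algebra_simps)
qed

section \<open>The Parry measure\<close>

text \<open>\<open>T\<close> maps \<open>[b, 1)\<close> onto \<open>[T b, 3)\<close> and \<open>[1, 3]\<close> onto \<open>[0, 3]\<close>, both affinely with slope \<open>3/2\<close>.\<close>
lemma emeasure_T_vimage_above_le:
  assumes b: "b \<in> {0..3}" and [measurable]: "A \<in> sets borel"
  shows "emeasure lborel ({x\<in>{0..3}. T x \<in> A} \<inter> {b..3})
    \<le> ennreal (2/3) * emeasure lborel (A \<inter> {T b..3})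
      + (if b < 1 then ennreal (2/3) * emeasure lborel (A \<inter> {0..3}) else 0)"
proof (cases "b < 1")
  case True
  let ?f1 = "\<lambda>x::real. 3/2 + 3/2 * x" and ?f2 = "\<lambda>x::real. -3/2 + 3/2 * x"
  have "{x\<in>{0..3}. T x \<in> A} \<inter> {b..3} \<subseteq> ?f1 -` (A \<inter> {T b..3}) \<union> ?f2 -` (A \<inter> {0..3})"
  proof
    fix x assume "x \<in> {x\<in>{0..3}. T x \<in> A} \<inter> {b..3}"
    then show "x \<in> ?f1 -` (A \<inter> {T b..3}) \<union> ?f2 -` (A \<inter> {0..3})"
      using True by (cases "x < 1") (auto simp: T_less_1 T_ge_1)
  qed
  then have "emeasure lborel ({x\<in>{0..3}. T x \<in> A} \<inter> {b..3})
      \<le> emeasure lborel (?f1 -` (A \<inter> {T b..3}) \<union> ?f2 -` (A \<inter> {0..3}))"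
    by (rule emeasure_mono) (auto intro!: affine_vimage_in_borel)
  also have "\<dots> \<le> emeasure lborel (?f1 -` (A \<inter> {T b..3})) + emeasure lborel (?f2 -` (A \<inter> {0..3}))"
    by (rule emeasure_subadditive) (auto intro!: affine_vimage_in_borel)
  also have "\<dots> = ennreal (2/3) * emeasure lborel (A \<inter> {T b..3})
      + ennreal (2/3) * emeasure lborel (A \<inter> {0..3})"
    using emeasure_lborel_affine_vimage[of "3/2" "A \<inter> {T b..3}" "3/2"]
      emeasure_lborel_affine_vimage[of "3/2" "A \<inter> {0..3}" "-3/2"] by simp
  finally show ?thesis
    using True by simp
next
  case False
  let ?f2 = "\<lambda>x::real. -3/2 + 3/2 * x"
  have "{x\<in>{0..3}. T x \<in> A} \<inter> {b..3} \<subseteq> ?f2 -` (A \<inter> {T b..3})"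
    using False b by (auto simp: T_ge_1)
  then have "emeasure lborel ({x\<in>{0..3}. T x \<in> A} \<inter> {b..3}) \<le> emeasure lborel (?f2 -` (A \<inter> {T b..3}))"
    by (rule emeasure_mono) (auto intro!: affine_vimage_in_borel)
  also have "\<dots> = ennreal (2/3) * emeasure lborel (A \<inter> {T b..3})"
    using emeasure_lborel_affine_vimage[of "3/2" "A \<inter> {T b..3}" "-3/2"] by simp
  finally show ?thesis
    using False by simp
qed

text \<open>The unnormalised Parry measure of \<open>T\<close>; its density \<open>\<Sum>\<^sub>j (2/3)\<^sup>j 1[T\<^sup>j 0, 3]\<close> lies between 1 and 3.\<close>
definition parry :: "real set \<Rightarrow> ennreal" where
  "parry A = (\<Sum>j. ennreal ((2/3)^j) * emeasure lborel (A \<inter> {(T ^^ j) 0..3}))"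

lemma parry_split_head:
  "parry A = emeasure lborel (A \<inter> {0..3})
    + (\<Sum>j. ennreal ((2/3)^Suc j) * emeasure lborel (A \<inter> {(T ^^ Suc j) 0..3}))"
  unfolding parry_def by (subst ennreal_suminf_split_head) simp

lemma emeasure_le_parry: "emeasure lborel (A \<inter> {0..3}) \<le> parry A"
  unfolding parry_split_head by simp

lemma parry_interval_le:
  assumes "c \<le> d"
  shows "parry {c..d} \<le> ennreal (3 * (d - c))"
proof -
  have "parry {c..d} \<le> (\<Sum>j. ennreal ((2/3)^j) * ennreal (d - c))"
    unfolding parry_def
  proof (rule suminf_le)
    fix j
    have "emeasure lborel ({c..d} \<inter> {(T ^^ j) 0..3}) \<le> emeasure lborel {c..d}"
      by (rule emeasure_mono) auto
    then show "ennreal ((2/3)^j) * emeasure lborel ({c..d} \<inter> {(T ^^ j) 0..3})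
        \<le> ennreal ((2/3)^j) * ennreal (d - c)"
      using assms by (intro mult_left_mono) auto
  qed auto
  also have "(\<Sum>j. ennreal ((2/3::real)^j) * ennreal (d - c)) = ennreal (\<Sum>j. (2/3::real)^j) * ennreal (d - c)"
    by (subst suminf_ennreal2[symmetric]) (auto intro: summable_geometric)
  also have "(\<Sum>j. (2/3::real)^j) = 3"
    by (subst suminf_geometric) auto
  also have "ennreal 3 * ennreal (d - c) = ennreal (3 * (d - c))"
    using assms by (subst ennreal_mult) auto
  finally show ?thesis .
qed

lemma orbit0_left_weights_le_1:
  "(\<Sum>j. ennreal (if (T ^^ j) 0 < 1 then (2/3)^Suc j else 0)) \<le> 1"
proof -
  have partial: "(\<Sum>j<n. if (T ^^ j) 0 < 1 then (2/3)^Suc j else 0)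
      = 1 - (2/3)^n * (1 - (T ^^ n) 0 / 3 :: real)" for n
  proof (induction n)
    case (Suc n)
    have step: "s + (if w < 1 then 2/3 * p else 0) = 1 - 2/3 * p * (1 - T w / 3)"
      if "s = 1 - p * (1 - w / 3)" for s p w :: real
      using that by (cases "w < 1") (simp_all add: T_less_1 T_ge_1 field_simps)
    show ?case
      using step[OF Suc.IH] by (cases "(T ^^ n) 0 < 1") simp_all
  qed simp
  have "(\<Sum>j<n. if (T ^^ j) 0 < 1 then (2/3::real)^Suc j else 0) \<le> 1" for n
    using funpow_T_in_range[of 0 n] by (simp add: partial)
  then have "(\<Sum>j<n. ennreal (if (T ^^ j) 0 < 1 then (2/3)^Suc j else 0)) \<le> 1" for n
    by (subst sum_ennreal) (auto simp: ennreal_le_1)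
  then show ?thesis
    unfolding suminf_eq_SUP by (rule SUP_least)
qed

lemma parry_T_vimage_le:
  assumes [measurable]: "A \<in> sets borel"
  shows "parry {x\<in>{0..3}. T x \<in> A} \<le> parry A"
proof -
  let ?m = "\<lambda>j. emeasure lborel (A \<inter> {(T ^^ j) 0..3})"
  let ?M = "emeasure lborel (A \<inter> {0..3})"
  let ?w = "\<lambda>j. ennreal (if (T ^^ j) 0 < 1 then (2/3)^Suc j else 0)"
  have "parry {x\<in>{0..3}. T x \<in> A} \<le> (\<Sum>j. ennreal ((2/3)^j)
      * (ennreal (2/3) * ?m (Suc j) + (if (T ^^ j) 0 < 1 then ennreal (2/3) * ?M else 0)))"
    unfolding parry_def
    using emeasure_T_vimage_above_le[OF funpow_T_in_range[of 0] assms]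
    by (intro suminf_le mult_left_mono) auto
  also have "\<dots> = (\<Sum>j. ennreal ((2/3)^Suc j) * ?m (Suc j) + ?w j * ?M)"
    by (intro suminf_cong)
      (auto simp: distrib_left ennreal_mult[symmetric] mult.assoc[symmetric] mult.commute[of _ 2])
  also have "\<dots> = (\<Sum>j. ennreal ((2/3)^Suc j) * ?m (Suc j)) + (\<Sum>j. ?w j) * ?M"
    by (subst suminf_add[symmetric]) auto
  also have "\<dots> \<le> (\<Sum>j. ennreal ((2/3)^Suc j) * ?m (Suc j)) + ?M"
  proof (rule add_left_mono)
    have "(\<Sum>j. ?w j) * ?M \<le> 1 * ?M"
      by (rule mult_right_mono[OF orbit0_left_weights_le_1]) simp
    then show "(\<Sum>j. ?w j) * ?M \<le> ?M"
      by simp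
  qed
  also have "\<dots> = parry A"
    by (simp add: parry_split_head add.commute)
  finally show ?thesis .
qed

lemma emeasure_funpow_T_vimage_le_parry:
  assumes "A \<in> sets borel"
  shows "emeasure lborel {x\<in>{0..3}. (T ^^ n) x \<in> A} \<le> parry A"
  using assms
proof (induction n arbitrary: A)
  case 0
  then show ?case
    using emeasure_le_parry[of A] by (simp add: Int_def conj_commute)
next
  case (Suc n)
  have [measurable]: "A \<in> sets borel"
    by (fact Suc.prems)
  have "{x\<in>{0..3}. (T ^^ Suc n) x \<in> A} = {x\<in>{0..3}. (T ^^ n) x \<in> {y\<in>{0..3}. T y \<in> A}}"
    using funpow_T_in_range by auto
  also have "emeasure lborel \<dots> \<le> parry {y\<in>{0..3}. T y \<in> A}"
    by (rule Suc.IH) (simp add: sets_T_vimage)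
  also have "\<dots> \<le> parry A"
    by (rule parry_T_vimage_le) fact
  finally show ?case .
qed

lemma emeasure_funpow_T_vimage_interval_le:
  assumes "c \<le> d"
  shows "emeasure lborel {x\<in>{0..3}. (T ^^ n) x \<in> {c..d}} \<le> ennreal (3 * (d - c))"
proof -
  have "emeasure lborel {x\<in>{0..3}. (T ^^ n) x \<in> {c..d}} \<le> parry {c..d}"
    by (rule emeasure_funpow_T_vimage_le_parry) simp
  also have "\<dots> \<le> ennreal (3 * (d - c))"
    by (rule parry_interval_le) fact
  finally show ?thesis .
qed

section \<open>Orbits approach 1 at most subexponentially\<close>

lemma AE_funpow_T_ne_1: "AE x in lborel. \<forall>n. x \<in> {0..3} \<longrightarrow> (T ^^ n) x \<noteq> 1"
  unfolding AE_all_countable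
proof
  fix n
  have "emeasure lborel {x\<in>{0..3}. (T ^^ n) x \<in> {1..1}} = 0"
    using emeasure_funpow_T_vimage_interval_le[of 1 1 n] by simp
  then have "{x\<in>{0..3}. (T ^^ n) x \<in> {1..1}} \<in> null_sets lborel"
    by (simp add: null_sets_def sets_funpow_T_vimage)
  from AE_not_in[OF this] show "AE x in lborel. x \<in> {0..3} \<longrightarrow> (T ^^ n) x \<noteq> 1"
    by eventually_elim auto
qed

lemma AE_eventually_funpow_T_far_from_1:
  fixes q :: real
  assumes "0 < q" "q < 1"
  shows "AE x in lborel. x \<in> {0..3} \<longrightarrow> eventually (\<lambda>n. q^n < \<bar>(T ^^ n) x - 1\<bar>) sequentially"
proof -
  define E where "E n = {x\<in>{0..3}. (T ^^ n) x \<in> {1 - q^n..1 + q^n}}" for n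
  have E_sets: "E n \<in> sets lborel" for n
    unfolding E_def by (simp add: sets_funpow_T_vimage)
  have E_le: "emeasure lborel (E n) \<le> ennreal (6 * q^n)" for n
    unfolding E_def using emeasure_funpow_T_vimage_interval_le[of "1 - q^n" "1 + q^n" n] assms
    by simp
  have E_finite: "emeasure lborel (E n) < \<infinity>" for n
    using E_le[of n] by (simp add: le_less_trans)
  have bound: "measure lborel (E n) \<le> 6 * q^n" for n
    unfolding measure_def by (rule enn2real_leI[OF _ E_le]) (use assms in simp)
  have "summable (\<lambda>n. measure lborel (E n))"
  proof (rule summable_comparison_test')
    show "summable (\<lambda>n. 6 * q^n)"
      using assms by (intro summable_mult summable_geometric) auto
    show "norm (measure lborel (E n)) \<le> 6 * q^n" for n
      using bound[of n] by simp
  qed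
  with E_sets E_finite have "AE x in lborel. eventually (\<lambda>n. x \<in> space lborel - E n) sequentially"
    by (rule borel_cantelli_AE1)
  then show ?thesis
  proof eventually_elim
    case (elim x)
    show ?case
    proof
      assume "x \<in> {0..3}"
      with elim show "eventually (\<lambda>n. q^n < \<bar>(T ^^ n) x - 1\<bar>) sequentially"
        by (elim eventually_mono) (auto simp: E_def)
    qed
  qed
qed

lemma AE_funpow_T_far_from_1:
  "AE x in lborel. x \<in> {0..3} \<longrightarrow>
     (\<forall>\<theta>>0. \<exists>c>0. \<forall>n. c * (2/3) powr (\<theta> * real n) \<le> \<bar>(T ^^ n) x - 1\<bar>)"
proof -
  define q where "q m = (2/3::real) powr (1 / Suc m)" for m :: nat
  have q: "0 < q m" "q m < 1" for m
    unfolding q_def using powr_less_mono'[of "2/3::real" 0 "1 / Suc m"] by auto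
  have "AE x in lborel. \<forall>m. x \<in> {0..3} \<longrightarrow> eventually (\<lambda>n. q m ^ n < \<bar>(T ^^ n) x - 1\<bar>) sequentially"
    unfolding AE_all_countable using AE_eventually_funpow_T_far_from_1[OF q] by blast
  with AE_funpow_T_ne_1 show ?thesis
  proof eventually_elim
    case (elim x)
    show ?case
    proof (intro impI allI)
      fix \<theta> :: real assume x: "x \<in> {0..3}" and "\<theta> > 0"
      then obtain m where m: "1 / Suc m < \<theta>"
        using reals_Archimedean by (auto simp: inverse_eq_divide)
      obtain c where "c > 0" and c: "\<And>n. c * q m ^ n \<le> \<bar>(T ^^ n) x - 1\<bar>"
        using uniform_scaled_lower_bound[of "\<lambda>n. \<bar>(T ^^ n) x - 1\<bar>" "\<lambda>n. q m ^ n"] elim x q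
        by auto
      have "(2/3) powr (\<theta> * real n) \<le> q m ^ n" for n
      proof -
        have "q m ^ n = (2/3) powr (1 / Suc m * real n)"
          unfolding q_def by (simp add: powr_realpow[symmetric] powr_powr)
        moreover have "1 / Suc m * real n \<le> \<theta> * real n"
          using m by (intro mult_right_mono) auto
        ultimately show ?thesis
          by (simp add: powr_mono')
      qed
      then have "c * (2/3) powr (\<theta> * real n) \<le> \<bar>(T ^^ n) x - 1\<bar>" for n
        using c[of n] mult_left_mono[of _ _ c] \<open>c > 0\<close> by (meson less_imp_le order_trans)
      with \<open>c > 0\<close> show "\<exists>c>0. \<forall>n. c * (2/3) powr (\<theta> * real n) \<le> \<bar>(T ^^ n) x - 1\<bar>"
        by blast
    qed
  qed
qed

lemma kx_asymp_log_two_thirds: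
  assumes x: "x \<in> {0<..<3}"
    and far: "\<forall>\<theta>>0. \<exists>c>0. \<forall>n. c * (2/3) powr (\<theta> * real n) \<le> \<bar>(T ^^ n) x - 1\<bar>"
  shows "((\<lambda>\<epsilon>. real (kx x \<epsilon>) / log (2/3) \<bar>\<epsilon>\<bar>) \<longlongrightarrow> 1) (at 0)"
proof (rule tendsto_quotient_1_sandwich[where C = "log (3/2) 3"])
  have x03: "x \<in> {0..3}"
    using x by auto
  have "eventually (\<lambda>\<epsilon>. \<epsilon> \<in> {-x<..<3 - x}) (nhds 0)"
    using x by (intro eventually_nhds_in_open) auto
  then have near: "eventually (\<lambda>\<epsilon>. x + \<epsilon> \<in> {0..3} \<and> \<epsilon> \<noteq> 0) (at 0)"
    unfolding eventually_at_filter by eventually_elim auto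
  show "filterlim (\<lambda>\<epsilon>. log (2/3) \<bar>\<epsilon>\<bar>) at_top (at 0)"
    by (rule filterlim_log_two_thirds_abs_at_0)
  show "eventually (\<lambda>\<epsilon>. real (kx x \<epsilon>) \<le> log (2/3) \<bar>\<epsilon>\<bar> + log (3/2) 3) (at 0)"
    using near by eventually_elim (use kx_le_log x03 in blast)
  fix \<theta> :: real assume "\<theta> > 0"
  then obtain c where "c > 0" and c: "\<And>n. c * (2/3) powr (\<theta> * real n) \<le> \<bar>(T ^^ n) x - 1\<bar>"
    using far by blast
  have "eventually (\<lambda>\<epsilon>. log (2/3) \<bar>\<epsilon>\<bar> \<le> (1 + \<theta>) * real (kx x \<epsilon>) + - log (3/2) c) (at 0)"
    using near by eventually_elim (use log_le_kx[OF x03 _ _ \<open>c > 0\<close> c] in auto)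
  then show "\<exists>C'. eventually (\<lambda>\<epsilon>. log (2/3) \<bar>\<epsilon>\<bar> \<le> (1 + \<theta>) * real (kx x \<epsilon>) + C') (at 0)"
    by blast
qed

theorem lemma6p1:
  shows "AE x in lborel. x \<in> {0<..<3} \<longrightarrow>
           ((\<lambda>\<epsilon>. real (kx x \<epsilon>) / log (2/3) \<bar>\<epsilon>\<bar>) \<longlongrightarrow> 1) (at 0)"
  using AE_funpow_T_far_from_1 by eventually_elim (auto intro: kx_asymp_log_two_thirds)

end
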